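(* Let $\mu$ be the probability measure on $\mathrm{Homeo}_+(\mathbb{R})$ giving mass $1/2$ to each of the maps \[ f_1(x)=\begin{cases}x+1,& x<0,\\ 2x+1,& x\ge 0,\end{cases}\qquad f_2(x)=x-1. \] Then $\phi_+\equiv 1$ (every point tends to $+\infty$ almost surely under the forward dynamics), while $\hat\phi_0\equiv 1$ (under the inverse dynamics, for every point the random orbit almost surely tends neither to $+\infty$ nor to $-\infty$).
   Context: Let $g_1,g_2,\dots$ be i.i.d. random maps with law $\mu$, and set $F_n=g_n\circ\cdots\circ g_1$ (forward dynamics); the inverse dynamics is the random dynamical system defined by $\hat\mu$, the image of $\mu$ under $f\mapsto f^{-1}$, with random compositions $\hat F_n$. Let $\phi_+(x)=\mathbb{P}(\lim_n F_n(x)=+\infty)$, and $\hat\phi_0(x)=1-\mathbb{P}(\lim_n\hat F_n(x)=+\infty)-\mathbb{P}(\lim_n\hat F_n(x)=-\infty)$. *)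

theory Defs
  imports "HOL-Probability.Probability"
begin

definition f1 :: "real \<Rightarrow> real" where
  "f1 x = (if x < 0 then x + 1 else 2 * x + 1)"

definition f2 :: "real \<Rightarrow> real" where
  "f2 x = x - 1"

text \<open>Underlying probability space: i.i.d. fair coins; coin k selects the (k+1)-th map.\<close>
definition coins :: "(nat \<Rightarrow> bool) measure" where
  "coins = (\<Pi>\<^sub>M k\<in>(UNIV::nat set). measure_pmf (bernoulli_pmf (1/2)))"

fun rcomp :: "(real \<Rightarrow> real) \<Rightarrow> (real \<Rightarrow> real) \<Rightarrow> (nat \<Rightarrow> bool) \<Rightarrow> nat \<Rightarrow> real \<Rightarrow> real" where
  "rcomp a b \<omega> 0 x = x"
| "rcomp a b \<omega> (Suc n) x = (if \<omega> n then a else b) (rcomp a b \<omega> n x)"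

text \<open>Forward dynamics (law mu: mass 1/2 on f1 and f2) and inverse dynamics (law hat mu:
  mass 1/2 on the inverses of f1 and f2).\<close>
definition Fwd :: "(nat \<Rightarrow> bool) \<Rightarrow> nat \<Rightarrow> real \<Rightarrow> real" where
  "Fwd = rcomp f1 f2"

definition Inv :: "(nat \<Rightarrow> bool) \<Rightarrow> nat \<Rightarrow> real \<Rightarrow> real" where
  "Inv = rcomp (inv f1) (inv f2)"

definition phi_plus :: "real \<Rightarrow> real" where
  "phi_plus x = measure coins {\<omega> \<in> space coins. filterlim (\<lambda>n. Fwd \<omega> n x) at_top sequentially}"

definition phi0_hat :: "real \<Rightarrow> real" where
  "phi0_hat x = 1
     - measure coins {\<omega> \<in> space coins. filterlim (\<lambda>n. Inv \<omega> n x) at_top sequentially}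
     - measure coins {\<omega> \<in> space coins. filterlim (\<lambda>n. Inv \<omega> n x) at_bot sequentially}"

end

theory Submission
  imports Defs "HOL-Library.Log_Nat"
begin

text \<open>
  Forward dynamics: \<open>phi_plus\<close> is monotone, bounded and harmonic,
  \<open>phi_plus x = (phi_plus (f1 x) + phi_plus (f2 x)) / 2\<close>. On the negative half-line
  \<open>f1\<close> and \<open>f2\<close> are the translations by \<open>\<plusminus>1\<close>, so a bounded harmonic function has
  constant increments there and is 1-periodic; harmonicity at the points \<open>2^k - 1\<close> and
  monotonicity then force it to be constant. The constant is 1 because from a high starting
  point the orbit escapes with probability close to 1: if \<open>f1\<close> is chosen at least once in
  every window \<open>[p, p + 2 log\<^sub>2 (p + Q)]\<close>, the descent by \<open>f2\<close> before the next \<open>f1\<close>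
  is more than compensated by the doubling, and a window is missed with probability
  \<open>O(1/(p + Q)\<^sup>2)\<close>, which is summable.

  Inverse dynamics: \<open>inv f1 y \<le> y - 1\<close> and \<open>inv f2 y = y + 1\<close>, with equality below 1, so the
  inverse orbit is dominated by a simple random walk and, once it stays below 1, is a
  translate of it. Divergence of the orbit to \<open>\<plusminus>\<infinity>\<close> therefore forces divergence of the walk,
  which has probability 0: by Kolmogorov's 0-1 law and the symmetry of the walk, the
  probabilities of divergence to \<open>+\<infinity>\<close> and to \<open>-\<infinity>\<close> are equal and lie in \<open>{0, 1}\<close>, and they
  cannot both be 1.
\<close>

lemma filterlim_sequentially_shift_iff:
  "filterlim (\<lambda>n. f (n + k)) F sequentially \<longleftrightarrow> filterlim f F sequentially"
  unfolding filterlim_iff by (simp add: eventually_sequentially_seg[where P="\<lambda>n. P (f n)" for P])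

lemma filterlim_at_top_iff_nat_thresholds:
  "filterlim f at_top sequentially \<longleftrightarrow> (\<forall>Z::nat. \<exists>N. \<forall>n\<ge>N. real Z \<le> (f n :: real))"
proof
  assume "\<forall>Z::nat. \<exists>N. \<forall>n\<ge>N. real Z \<le> f n"
  then show "filterlim f at_top sequentially"
    unfolding filterlim_at_top eventually_sequentially
    by (meson order_trans real_arch_simple)
qed (auto simp: filterlim_at_top eventually_sequentially)

lemma pred_filterlim_at_top:
  fixes G :: "'a \<Rightarrow> nat \<Rightarrow> real"
  assumes [measurable]: "\<And>n. (\<lambda>\<omega>. G \<omega> n) \<in> borel_measurable M"
  shows "Measurable.pred M (\<lambda>\<omega>. filterlim (G \<omega>) at_top sequentially)"
  unfolding filterlim_at_top_iff_nat_thresholds by measurable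

lemma pred_filterlim_at_bot:
  fixes G :: "'a \<Rightarrow> nat \<Rightarrow> real"
  assumes [measurable]: "\<And>n. (\<lambda>\<omega>. G \<omega> n) \<in> borel_measurable M"
  shows "Measurable.pred M (\<lambda>\<omega>. filterlim (G \<omega>) at_bot sequentially)"
  unfolding filterlim_uminus_at_bot by (rule pred_filterlim_at_top) measurable

lemma not_filterlim_at_top_and_at_bot:
  fixes f :: "'a \<Rightarrow> real"
  assumes "F \<noteq> bot" "filterlim f at_top F" "filterlim f at_bot F"
  shows False
proof -
  have "eventually (\<lambda>x. 1 \<le> f x) F" "eventually (\<lambda>x. f x \<le> 0) F"
    using assms(2,3) by (simp_all add: filterlim_at_top filterlim_at_bot)
  then have "eventually (\<lambda>x. False) F"
    by eventually_elim simp
  with assms(1) show False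
    by (simp add: eventually_False)
qed

lemma space_coins [simp]: "space coins = UNIV"
  by (simp add: coins_def space_PiM)

interpretation coin_sequence: sequence_space "measure_pmf (bernoulli_pmf (1/2))"
  by unfold_locales

interpretation coins: prob_space coins
  unfolding coins_def by (rule coin_sequence.P.prob_space_axioms)

lemma measurable_coin [measurable]: "(\<lambda>\<omega>. \<omega> n) \<in> measurable coins (count_space UNIV)"
proof -
  have "(\<lambda>\<omega>. \<omega> n) \<in> measurable coins (measure_pmf (bernoulli_pmf (1/2)))"
    unfolding coins_def by (rule measurable_component_singleton) simp
  then show ?thesis by (simp add: measurable_def)
qed

lemma measurable_rcomp:
  assumes [measurable]: "a \<in> borel_measurable borel" "b \<in> borel_measurable borel"
  shows "(\<lambda>\<omega>. rcomp a b \<omega> n x) \<in> borel_measurable coins"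
proof (induction n)
  case (Suc n)
  have "(\<lambda>\<omega>. rcomp a b \<omega> (Suc n) x) =
      (\<lambda>\<omega>. if \<omega> n then a (rcomp a b \<omega> n x) else b (rcomp a b \<omega> n x))"
    by auto
  also have "\<dots> \<in> borel_measurable coins"
    by (rule measurable_If[OF measurable_compose[OF Suc assms(1)] measurable_compose[OF Suc assms(2)]])
      measurable
  finally show ?case .
qed simp

lemma rcomp_Suc_shift:
  "rcomp a b \<omega> (Suc n) x = rcomp a b (\<lambda>k. \<omega> (Suc k)) n ((if \<omega> 0 then a else b) x)"
  by (induction n arbitrary: x) auto

lemma ennreal_average:
  "0 \<le> a \<Longrightarrow> 0 \<le> b \<Longrightarrow> ennreal (1/2) * ennreal a + ennreal (1/2) * ennreal b = ennreal ((a + b) / 2)"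
  by (metis add_divide_distrib ennreal_plus ennreal_mult' mult.commute times_divide_eq_right mult_1
      zero_le_divide_iff zero_le_numeral)

lemma measure_coins_first_step:
  assumes A: "A \<in> sets coins"
  shows "measure coins A =
    (measure coins {\<omega>. case_nat True \<omega> \<in> A} + measure coins {\<omega>. case_nat False \<omega> \<in> A}) / 2"
proof -
  let ?B = "measure_pmf (bernoulli_pmf (1/2))"
  let ?cons = "\<lambda>(s, \<omega>). case_nat s \<omega>"
  have cons: "?cons \<in> measurable (?B \<Otimes>\<^sub>M coins) coins"
    unfolding coins_def by measurable
  have "emeasure coins A = emeasure (distr (?B \<Otimes>\<^sub>M coins) coins ?cons) A"
    using coin_sequence.PiM_iter by (simp add: coins_def)
  also have "\<dots> = emeasure (?B \<Otimes>\<^sub>M coins) (?cons -` A \<inter> space (?B \<Otimes>\<^sub>M coins))"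
    by (rule emeasure_distr[OF cons A])
  also have "\<dots> = \<integral>\<^sup>+ s. emeasure coins (Pair s -` (?cons -` A \<inter> space (?B \<Otimes>\<^sub>M coins))) \<partial>?B"
    by (rule coins.emeasure_pair_measure_alt[OF measurable_sets[OF cons A]])
  also have "\<dots> = \<integral>\<^sup>+ s. emeasure coins {\<omega>. case_nat s \<omega> \<in> A} \<partial>?B"
    by (intro nn_integral_cong arg_cong[where f="emeasure coins"]) (auto simp: space_pair_measure)
  also have "\<dots> = ennreal (1/2) * emeasure coins {\<omega>. case_nat True \<omega> \<in> A}
      + ennreal (1/2) * emeasure coins {\<omega>. case_nat False \<omega> \<in> A}"
    by (simp add: nn_integral_measure_pmf nn_integral_count_space_finite UNIV_bool)
  also have "\<dots> = ennreal ((measure coins {\<omega>. case_nat True \<omega> \<in> A}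
      + measure coins {\<omega>. case_nat False \<omega> \<in> A}) / 2)"
    unfolding coins.emeasure_eq_measure by (rule ennreal_average) simp_all
  finally show ?thesis
    by (simp add: coins.emeasure_eq_measure)
qed

lemma f1_eq_max: "f1 x = max (x + 1) (2 * x + 1)"
  by (simp add: f1_def max_def)

lemma mono_f1: "mono f1"
  by (rule monoI) (simp add: f1_eq_max max_def)

lemma measurable_f1 [measurable]: "f1 \<in> borel_measurable borel"
  unfolding f1_eq_max[abs_def] by measurable

lemma measurable_f2 [measurable]: "f2 \<in> borel_measurable borel"
  unfolding f2_def by measurable

lemma Fwd_Suc: "Fwd \<omega> (Suc n) x = (if \<omega> n then f1 else f2) (Fwd \<omega> n x)"
  by (simp add: Fwd_def)

lemma mono_Fwd: "mono (Fwd \<omega> n)"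
proof (induction n)
  case (Suc n)
  have "mono (if \<omega> n then f1 else f2)"
    using mono_f1 by (simp add: mono_def f2_def)
  with Suc show ?case
    by (simp add: Fwd_Suc mono_def)
qed (simp add: Fwd_def mono_def)

definition escaping :: "real \<Rightarrow> (nat \<Rightarrow> bool) set" where
  "escaping x = {\<omega> \<in> space coins. filterlim (\<lambda>n. Fwd \<omega> n x) at_top sequentially}"

lemma escaping_sets [measurable]: "escaping x \<in> sets coins"
  unfolding escaping_def Fwd_def
  by (rule pred_filterlim_at_top[unfolded pred_def]) (rule measurable_rcomp; measurable)

lemma phi_plus_eq_escaping: "phi_plus x = measure coins (escaping x)"
  by (simp add: phi_plus_def escaping_def)

lemma escaping_case_nat:
  "{\<omega>. case_nat s \<omega> \<in> escaping x} = escaping ((if s then f1 else f2) x)"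
proof -
  have "Fwd (case_nat s \<omega>) (Suc n) x = Fwd \<omega> n ((if s then f1 else f2) x)" for \<omega> n
    unfolding Fwd_def by (subst rcomp_Suc_shift) simp
  then have "filterlim (\<lambda>n. Fwd (case_nat s \<omega>) n x) at_top sequentially \<longleftrightarrow>
      filterlim (\<lambda>n. Fwd \<omega> n ((if s then f1 else f2) x)) at_top sequentially" for \<omega>
    by (subst filterlim_sequentially_Suc[symmetric]) simp
  then show ?thesis
    by (auto simp: escaping_def)
qed

lemma phi_plus_harmonic: "phi_plus x = (phi_plus (f1 x) + phi_plus (f2 x)) / 2"
  unfolding phi_plus_eq_escaping
  using measure_coins_first_step[OF escaping_sets, of x] by (simp add: escaping_case_nat)

lemma mono_phi_plus: "mono phi_plus"
proof (rule monoI)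
  fix x y :: real
  assume "x \<le> y"
  then have "escaping x \<subseteq> escaping y"
    unfolding escaping_def using monoD[OF mono_Fwd]
    by (auto elim!: filterlim_at_top_mono simp: eventually_sequentially)
  then show "phi_plus x \<le> phi_plus y"
    unfolding phi_plus_eq_escaping by (intro coins.finite_measure_mono escaping_sets)
qed

lemma bounded_harmonic_translation_invariant:
  fixes p :: "real \<Rightarrow> real"
  assumes bounded: "\<And>x. \<bar>p x\<bar> \<le> B"
    and harmonic: "\<And>y. y < 0 \<Longrightarrow> p y = (p (y + 1) + p (y - 1)) / 2"
    and x: "x < 0"
  shows "p (x + 1) = p x"
proof -
  define d where "d = p (x + 1) - p x"
  have increment: "p (x - real n + 1) - p (x - real n) = d" for n
  proof (induction n)
    case (Suc n)
    have "x - real n < 0" using x by simp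
    from harmonic[OF this] Suc show ?case
      by (simp add: algebra_simps)
  qed (simp add: d_def)
  have growth: "p (x + 1) - p (x - real n) = (real n + 1) * d" for n
  proof (induction n)
    case (Suc n)
    have "p (x + 1) - p (x - real (Suc n)) = (p (x + 1) - p (x - real n))
        + (p (x - real (Suc n) + 1) - p (x - real (Suc n)))"
      by (simp add: algebra_simps)
    with Suc increment[of "Suc n"] show ?case
      by (simp add: algebra_simps)
  qed (simp add: d_def)
  have "\<bar>real n + 1\<bar> * \<bar>d\<bar> \<le> 2 * B" for n
    using growth[of n] bounded[of "x + 1"] bounded[of "x - real n"] by (simp add: abs_mult[symmetric])
  then have bound: "(real n + 1) * \<bar>d\<bar> \<le> 2 * B" for n
    by simp
  show ?thesis
  proof (rule ccontr)
    assume "p (x + 1) \<noteq> p x"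
    then have d: "\<bar>d\<bar> > 0"
      by (simp add: d_def)
    obtain n :: nat where "2 * B / \<bar>d\<bar> < real n"
      using reals_Archimedean2 by blast
    then have "2 * B < real n * \<bar>d\<bar>"
      using d by (simp add: field_simps)
    also have "\<dots> \<le> (real n + 1) * \<bar>d\<bar>"
      by (simp add: algebra_simps)
    finally show False
      using bound[of n] by simp
  qed
qed

lemma harmonic_translation_invariant:
  fixes p :: "real \<Rightarrow> real"
  assumes bounded: "\<And>x. \<bar>p x\<bar> \<le> B"
    and harmonic: "\<And>x. p x = (p (f1 x) + p (f2 x)) / 2"
  shows "x < 0 \<Longrightarrow> p (x + 1) = p x"
proof (rule bounded_harmonic_translation_invariant[OF bounded])
  fix y :: real
  assume "y < 0"
  then show "p y = (p (y + 1) + p (y - 1)) / 2"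
    using harmonic[of y] by (simp add: f1_def f2_def)
qed

lemma mono_harmonic_le_at_0:
  fixes p :: "real \<Rightarrow> real"
  assumes "mono p"
    and bounded: "\<And>x. \<bar>p x\<bar> \<le> B"
    and harmonic: "\<And>x. p x = (p (f1 x) + p (f2 x)) / 2"
  shows "p x \<le> p 0"
proof -
  have at_minus_1: "p (-1) = p 0"
    using harmonic_translation_invariant[OF bounded harmonic, of "-1"] by simp
  have dyadic: "p (2 ^ k - 1) = p 0" for k :: nat
  proof (induction k)
    case (Suc k)
    define a :: real where "a = 2 ^ k - 1"
    have "0 \<le> a"
      by (simp add: a_def)
    then have "p (-1) \<le> p (a - 1)" "p (a - 1) \<le> p a"
      by (simp_all add: \<open>mono p\<close> monoD)
    then have "p (a - 1) = p 0"
      using Suc at_minus_1 by (simp add: a_def)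
    moreover have "p a = (p (2 * a + 1) + p (a - 1)) / 2"
      using harmonic[of a] \<open>0 \<le> a\<close> by (simp add: f1_def f2_def)
    ultimately show ?case
      using Suc by (simp add: a_def)
  qed simp
  obtain k :: nat where "x \<le> real k"
    using real_arch_simple by blast
  also have "real k \<le> 2 ^ k - 1"
  proof (induction k)
    case (Suc k)
    have "(1::real) \<le> 2 ^ k"
      by simp
    with Suc show ?case
      by simp
  qed simp
  finally have "p x \<le> p (2 ^ k - 1)"
    by (simp add: \<open>mono p\<close> monoD)
  with dyadic show ?thesis
    by simp
qed

lemma mono_harmonic_const:
  fixes p :: "real \<Rightarrow> real"
  assumes "mono p"
    and bounded: "\<And>x. \<bar>p x\<bar> \<le> B"
    and harmonic: "\<And>x. p x = (p (f1 x) + p (f2 x)) / 2"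
  shows "p x = p 0"
proof -
  have nonneg: "p y = p 0" if "0 \<le> y" for y
    using mono_harmonic_le_at_0[OF assms, of y] monoD[OF \<open>mono p\<close> that] by (rule order_antisym)
  have p_eq: "p y = p 0" if "- real n \<le> y" for n y
    using that
  proof (induction n arbitrary: y)
    case (Suc n)
    show ?case
    proof (cases "y < 0")
      case True
      then have "p y = p (y + 1)"
        using harmonic_translation_invariant[OF bounded harmonic, of y] by simp
      also have "\<dots> = p 0"
        using Suc.prems by (intro Suc.IH) simp
      finally show ?thesis .
    qed (intro nonneg; simp)
  qed (intro nonneg; simp)
  obtain n :: nat where "- x \<le> real n"
    using real_arch_simple by blast
  then show ?thesis
    by (intro p_eq[of n]) simp
qed

definition window :: "nat \<Rightarrow> nat \<Rightarrow> nat" where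
  "window Q p = 2 * floorlog 2 (p + Q)"

lemma linear_le_power_of_2: "5 \<le> L \<Longrightarrow> 2 * L + 1 \<le> (2::nat) ^ (L - 1)"
proof (induction L rule: dec_induct)
  case (step L)
  then have "2 * Suc L + 1 \<le> 2 * 2 ^ (L - 1)"
    by simp
  also have "\<dots> = (2::nat) ^ (Suc L - 1)"
    using step(1) by (cases L) auto
  finally show ?case .
qed simp

lemma window_step:
  assumes Q: "16 \<le> Q" and m': "m' \<le> m + window Q m + 1"
  shows "window Q m' \<le> window Q m + 2"
proof -
  define L where "L = floorlog 2 (m + Q)"
  have "5 \<le> L"
    unfolding L_def by (rule floorlog_geI) (use Q in simp_all)
  moreover have bounds: "2 ^ (L - 1) \<le> m + Q \<and> m + Q < 2 ^ L"
    unfolding L_def by (rule floorlog_bounds) (use Q in simp_all)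
  ultimately have "2 * L + 1 \<le> m + Q"
    using linear_le_power_of_2 by (meson order_trans)
  then have "m' + Q \<le> 2 * (m + Q)"
    using m' by (simp add: window_def L_def)
  also have "\<dots> < 2 ^ Suc L"
    using bounds by simp
  finally have "floorlog 2 (m' + Q) \<le> Suc L"
    by (intro floorlog_leI) simp_all
  then show ?thesis
    by (simp add: window_def L_def)
qed

context
  fixes \<omega> :: "nat \<Rightarrow> bool" and Q :: nat and X :: real
  assumes Q: "16 \<le> Q" and hits_window: "\<And>p. \<exists>j \<le> window Q p. \<omega> (p + j)"
begin

abbreviation orbit :: "nat \<Rightarrow> real" where
  "orbit n \<equiv> Fwd \<omega> n X"

text \<open>
  Invariant of the escape argument: at a high time the orbit lies so far above the current
  window length that descending by \<open>f2\<close> for a whole window keeps it nonnegative, after which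
  \<open>f1\<close> roughly doubles it.
\<close>

definition high :: "nat \<Rightarrow> bool" where
  "high m \<longleftrightarrow> 2 * real (window Q m) + 3 \<le> orbit m"

lemma high_next:
  assumes "high m"
  obtains m' where "m < m'" "high m'" "orbit m + 1 \<le> orbit m'"
    "\<And>n. m \<le> n \<Longrightarrow> n < m' \<Longrightarrow> orbit m - real (window Q m) \<le> orbit n"
proof -
  define j where "j = (LEAST j. \<omega> (m + j))"
  obtain j0 where j0: "j0 \<le> window Q m" "\<omega> (m + j0)"
    using hits_window by blast
  then have hit: "\<omega> (m + j)"
    unfolding j_def by (intro LeastI[of "\<lambda>j. \<omega> (m + j)" j0])
  have j_le: "j \<le> window Q m"
    unfolding j_def using j0 by (meson Least_le order_trans)
  have descent: "orbit (m + i) = orbit m - real i" if "i \<le> j" for i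
    using that
  proof (induction i)
    case (Suc i)
    then have "\<not> \<omega> (m + i)"
      unfolding j_def using not_less_Least by (metis Suc_le_lessD)
    with Suc show ?case
      by (simp add: Fwd_Suc f2_def)
  qed simp
  have high_m: "2 * real (window Q m) + 3 \<le> orbit m"
    using assms by (simp add: high_def)
  have j_real: "real j \<le> real (window Q m)"
    using j_le by simp
  have jump: "orbit (Suc (m + j)) = 2 * (orbit m - real j) + 1"
    using descent[of j] hit high_m j_real by (simp add: Fwd_Suc f1_def)
  have "window Q (Suc (m + j)) \<le> window Q m + 2"
    using window_step[OF Q] j_le by simp
  then have "real (window Q (Suc (m + j))) \<le> real (window Q m) + 2"
    by linarith
  then have "high (Suc (m + j))"
    using jump high_m j_real by (simp add: high_def)
  moreover have "orbit m + 1 \<le> orbit (Suc (m + j))"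
    using jump high_m j_real by simp
  moreover have "orbit m - real (window Q m) \<le> orbit n" if "m \<le> n" "n < Suc (m + j)" for n
    using descent[of "n - m"] that j_real by simp
  ultimately show ?thesis
    using that[of "Suc (m + j)"] by simp
qed

lemma high_orbit_stays_high:
  "high m \<Longrightarrow> m \<le> n \<Longrightarrow> (orbit m + 3) / 2 \<le> orbit n"
proof (induction "n - m" arbitrary: m rule: less_induct)
  case less
  obtain m' where m': "m < m'" "high m'" "orbit m + 1 \<le> orbit m'"
    "\<And>n. m \<le> n \<Longrightarrow> n < m' \<Longrightarrow> orbit m - real (window Q m) \<le> orbit n"
    using high_next[OF less.prems(1)] by blast
  have "2 * real (window Q m) + 3 \<le> orbit m"
    using less.prems(1) by (simp add: high_def)
  show ?case
  proof (cases "n < m'")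
    case True
    with m'(4)[OF less.prems(2)] \<open>2 * real (window Q m) + 3 \<le> orbit m\<close> show ?thesis
      by simp
  next
    case False
    then have "(orbit m' + 3) / 2 \<le> orbit n"
      using m'(1,2) less.prems(2) by (intro less.hyps) simp_all
    with m'(3) show ?thesis
      by simp
  qed
qed

lemma high_orbit_unbounded: "high m \<Longrightarrow> \<exists>m'. high m' \<and> orbit m + real k \<le> orbit m'"
proof (induction k)
  case (Suc k)
  then obtain m' where "high m'" "orbit m + real k \<le> orbit m'"
    by blast
  moreover obtain m'' where "high m''" "orbit m' + 1 \<le> orbit m''"
    using high_next[OF \<open>high m'\<close>] by blast
  ultimately show ?case
    by (intro exI[of _ m'']) simp
qed auto

lemma orbit_escapes_from_high_start:
  assumes "2 * real (window Q 0) + 3 \<le> X"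
  shows "filterlim orbit at_top sequentially"
  unfolding filterlim_at_top eventually_sequentially
proof
  fix Z :: real
  have "high 0"
    using assms by (simp add: high_def Fwd_def)
  obtain k :: nat where k: "2 * Z - X \<le> real k"
    using real_arch_simple by blast
  obtain m where m: "high m" "orbit 0 + real k \<le> orbit m"
    using high_orbit_unbounded[OF \<open>high 0\<close>] by blast
  have "Z \<le> orbit n" if "m \<le> n" for n
    using high_orbit_stays_high[OF m(1) that] m(2) k assms by (simp add: Fwd_def)
  then show "\<exists>N. \<forall>n\<ge>N. Z \<le> orbit n"
    by blast
qed

end

definition missed_window :: "nat \<Rightarrow> nat \<Rightarrow> (nat \<Rightarrow> bool) set" where
  "missed_window Q p = {\<omega> \<in> space coins. \<forall>j \<le> window Q p. \<not> \<omega> (p + j)}"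

lemma missed_window_sets [measurable]: "missed_window Q p \<in> sets coins"
proof -
  have "Measurable.pred coins (\<lambda>\<omega>. \<forall>j \<le> window Q p. \<not> \<omega> (p + j))"
    by measurable
  then show ?thesis
    by (simp add: missed_window_def pred_def)
qed

lemma measure_missed_window: "measure coins (missed_window Q p) = (1/2) ^ (window Q p + 1)"
proof -
  let ?J = "{p..p + window Q p}"
  let ?B = "measure_pmf (bernoulli_pmf (1/2))"
  have "missed_window Q p = prod_emb UNIV (\<lambda>_. ?B) ?J (\<Pi>\<^sub>E i\<in>?J. {False})"
  proof (rule set_eqI)
    fix \<omega> :: "nat \<Rightarrow> bool"
    have "(\<forall>j \<le> window Q p. \<not> \<omega> (p + j)) \<longleftrightarrow> (\<forall>i\<in>?J. \<omega> i \<in> {False})"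
    proof (intro iffI ballI allI impI)
      fix i
      assume "\<forall>j \<le> window Q p. \<not> \<omega> (p + j)" "i \<in> ?J"
      moreover from \<open>i \<in> ?J\<close> have "i - p \<le> window Q p"
        by auto
      ultimately have "\<not> \<omega> (p + (i - p))"
        by blast
      with \<open>i \<in> ?J\<close> show "\<omega> i \<in> {False}"
        by simp
    qed auto
    moreover have "\<omega> \<in> prod_emb UNIV (\<lambda>_. ?B) ?J (\<Pi>\<^sub>E i\<in>?J. {False}) \<longleftrightarrow> (\<forall>i\<in>?J. \<omega> i \<in> {False})"
      by (simp only: prod_emb_iff restrict_PiE_iff) simp
    ultimately show "\<omega> \<in> missed_window Q p \<longleftrightarrow> \<omega> \<in> prod_emb UNIV (\<lambda>_. ?B) ?J (\<Pi>\<^sub>E i\<in>?J. {False})"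
      by (simp add: missed_window_def)
  qed
  then have "measure coins (missed_window Q p) = (\<Prod>i\<in>?J. measure ?B {False})"
    unfolding coins_def by (simp only:) (rule coin_sequence.measure_PiM_emb; auto)
  also have "\<dots> = (1/2) ^ (window Q p + 1)"
    by (simp add: measure_pmf_single)
  finally show ?thesis .
qed

lemma missed_window_probability_le:
  assumes "16 \<le> Q"
  shows "(1/2::real) ^ (window Q p + 1) \<le> 1 / (real (p + Q) - 1) - 1 / (real (Suc p + Q) - 1)"
proof -
  define q where "q = p + Q"
  define L where "L = floorlog 2 q"
  have "q < 2 ^ L"
    unfolding L_def using floorlog_bounds[of q 2] assms by (simp add: q_def)
  then have q_less: "real q < 2 ^ L"
    by (metis of_nat_less_iff of_nat_numeral of_nat_power)
  have q16: "16 \<le> real q"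
    using assms by (simp add: q_def)
  have "(1/2::real) ^ (window Q p + 1) = 1 / (2 * (2 ^ L)\<^sup>2)"
    by (simp add: window_def L_def q_def power_one_over power_add power_mult[symmetric] mult.commute)
  also have "\<dots> \<le> 1 / ((real q - 1) * real q)"
  proof (rule divide_left_mono)
    have "(real q - 1) * real q \<le> real q * real q"
      using q16 by simp
    also have "\<dots> \<le> 2 ^ L * 2 ^ L"
      using q_less q16 by (intro mult_mono) auto
    also have "\<dots> \<le> 2 * (2 ^ L)\<^sup>2"
      by (simp add: power2_eq_square)
    finally show "(real q - 1) * real q \<le> 2 * (2 ^ L)\<^sup>2" .
  qed (use q16 in auto)
  also have "\<dots> = 1 / (real q - 1) - 1 / real q"
    using q16 by (simp add: field_simps)
  also have "real q = real (Suc p + Q) - 1"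
    by (simp add: q_def)
  finally show ?thesis
    by (simp add: q_def)
qed

lemma measure_missed_some_window:
  assumes "16 \<le> Q"
  shows "measure coins (\<Union>p. missed_window Q p) \<le> 1 / (real Q - 1)"
proof -
  define t where "t n = 1 / (real (n + Q) - 1)" for n
  have "t \<longlonglongrightarrow> 0"
  proof -
    have "filterlim (\<lambda>n. real Q - 1 + real n) at_top sequentially"
      by (rule filterlim_tendsto_add_at_top[OF tendsto_const filterlim_real_sequentially])
    then have "filterlim (\<lambda>n. real (n + Q) - 1) at_infinity sequentially"
      by (intro filterlim_at_top_imp_at_infinity) (simp add: algebra_simps)
    then show ?thesis
      unfolding t_def by (rule tendsto_divide_0[OF tendsto_const])
  qed
  then have telescope: "(\<lambda>n. t n - t (Suc n)) sums t 0"
    using telescope_sums'[of t 0] by simp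
  have bound: "measure coins (missed_window Q p) \<le> t p - t (Suc p)" for p
    unfolding measure_missed_window t_def using missed_window_probability_le[OF assms] by simp
  have summable: "summable (\<lambda>p. measure coins (missed_window Q p))"
    by (rule summable_comparison_test'[OF sums_summable[OF telescope], of 0]) (use bound in auto)
  have "measure coins (\<Union>p. missed_window Q p) \<le> (\<Sum>p. measure coins (missed_window Q p))"
    by (rule coins.finite_measure_subadditive_countably) (use summable in auto)
  also have "\<dots> \<le> (\<Sum>p. t p - t (Suc p))"
    by (rule suminf_le[OF bound summable sums_summable[OF telescope]])
  also have "\<dots> = t 0"
    using telescope by (simp add: sums_iff)
  finally show ?thesis
    by (simp add: t_def)
qed

lemma phi_plus_near_1:
  assumes "0 < e"
  shows "\<exists>X. 1 - e \<le> phi_plus X"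
proof -
  obtain n :: nat where n: "1 / e < real n"
    using reals_Archimedean2 by blast
  define Q where "Q = n + 17"
  have Q: "16 \<le> Q"
    by (simp add: Q_def)
  have "1 < e * real n"
    using n assms by (simp add: divide_less_eq mult.commute)
  also have "\<dots> \<le> e * (real Q - 1)"
    using assms by (simp add: Q_def)
  finally have Q_e: "1 / (real Q - 1) \<le> e"
    using Q by (simp add: divide_le_eq)
  define X where "X = 2 * real (window Q 0) + 3"
  have "space coins - (\<Union>p. missed_window Q p) \<subseteq> escaping X"
  proof
    fix \<omega>
    assume "\<omega> \<in> space coins - (\<Union>p. missed_window Q p)"
    then have "\<And>p. \<exists>j \<le> window Q p. \<omega> (p + j)"
      by (auto simp: missed_window_def)
    from orbit_escapes_from_high_start[OF Q this] show "\<omega> \<in> escaping X"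
      by (simp add: escaping_def X_def)
  qed
  then have "measure coins (space coins - (\<Union>p. missed_window Q p)) \<le> phi_plus X"
    unfolding phi_plus_eq_escaping by (intro coins.finite_measure_mono escaping_sets)
  then have "1 - measure coins (\<Union>p. missed_window Q p) \<le> phi_plus X"
    by (subst (asm) coins.prob_compl) measurable
  with measure_missed_some_window[OF Q] Q_e show ?thesis
    by (intro exI[of _ X]) simp
qed

lemma phi_plus_eq_1: "phi_plus x = 1"
proof -
  have bounded: "\<bar>phi_plus y\<bar> \<le> 1" for y
    by (simp add: phi_plus_def)
  have const: "phi_plus y = phi_plus 0" for y
    using mono_harmonic_const[OF mono_phi_plus bounded phi_plus_harmonic] .
  have "1 \<le> phi_plus 0"
  proof (rule field_le_epsilon)
    fix e :: real
    assume "0 < e"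
    then obtain X where "1 - e \<le> phi_plus X"
      using phi_plus_near_1 by blast
    then show "1 \<le> phi_plus 0 + e"
      using const[of X] by simp
  qed
  then show ?thesis
    using const[of x] bounded[of 0] by simp
qed

definition walk :: "(nat \<Rightarrow> bool) \<Rightarrow> nat \<Rightarrow> real" where
  "walk \<omega> n = (\<Sum>k<n. if \<omega> k then -1 else 1)"

lemma walk_Suc: "walk \<omega> (Suc n) = walk \<omega> n + (if \<omega> n then -1 else 1)"
  by (simp add: walk_def)

lemma measurable_walk [measurable]: "(\<lambda>\<omega>. walk \<omega> n) \<in> borel_measurable coins"
  unfolding walk_def by measurable

definition walk_to_top :: "(nat \<Rightarrow> bool) set" where
  "walk_to_top = {\<omega> \<in> space coins. filterlim (walk \<omega>) at_top sequentially}"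

definition walk_to_bot :: "(nat \<Rightarrow> bool) set" where
  "walk_to_bot = {\<omega> \<in> space coins. filterlim (walk \<omega>) at_bot sequentially}"

lemma walk_to_top_sets [measurable]: "walk_to_top \<in> sets coins"
  unfolding walk_to_top_def by (rule pred_filterlim_at_top[unfolded pred_def]) measurable

lemma walk_to_bot_sets [measurable]: "walk_to_bot \<in> sets coins"
  unfolding walk_to_bot_def by (rule pred_filterlim_at_bot[unfolded pred_def]) measurable

definition coin_shift :: "nat \<Rightarrow> (nat \<Rightarrow> bool) \<Rightarrow> nat \<Rightarrow> bool" where
  "coin_shift n \<omega> = (\<lambda>k. \<omega> (k + n))"

lemma walk_add: "walk \<omega> (k + n) = walk \<omega> n + walk (coin_shift n \<omega>) k"
  by (induction k) (simp_all add: walk_def coin_shift_def add.commute)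

lemma coin_shift_preimage_walk_to_bot: "coin_shift n -` walk_to_bot = walk_to_bot"
proof -
  have "filterlim (walk \<omega>) at_bot sequentially \<longleftrightarrow> filterlim (walk (coin_shift n \<omega>)) at_bot sequentially"
    for \<omega>
  proof -
    have "filterlim (walk \<omega>) at_bot sequentially \<longleftrightarrow>
        filterlim (\<lambda>k. walk \<omega> n + walk (coin_shift n \<omega>) k) at_bot sequentially"
      by (simp add: walk_add filterlim_sequentially_shift_iff[where f="walk \<omega>" and k=n, symmetric])
    also have "\<dots> \<longleftrightarrow> filterlim (walk (coin_shift n \<omega>)) at_bot sequentially"
      by (rule filterlim_tendsto_add_at_bot_iff[OF tendsto_const])
    finally show ?thesis .
  qed
  then show ?thesis
    by (auto simp: walk_to_bot_def)
qed

definition coin_events :: "nat \<Rightarrow> (nat \<Rightarrow> bool) set set" where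
  "coin_events i = sigma_sets (space coins)
     {(\<lambda>\<omega>. \<omega> i) -` A \<inter> space coins | A. A \<in> sets (measure_pmf (bernoulli_pmf (1/2)))}"

lemma indep_coin_events: "coins.indep_sets coin_events UNIV"
proof -
  have rv: "coins.random_variable (measure_pmf (bernoulli_pmf (1/2))) (\<lambda>\<omega>. \<omega> i)" for i
    unfolding coins_def by (rule measurable_component_singleton) simp
  have restrict_id: "(\<lambda>\<omega>. \<lambda>i\<in>UNIV. \<omega> i) = (\<lambda>\<omega>. \<omega>)"
    by (simp add: fun_eq_iff)
  have "coins.indep_vars (\<lambda>_. measure_pmf (bernoulli_pmf (1/2))) (\<lambda>i \<omega>. \<omega> i) UNIV"
    by (subst coins.indep_vars_iff_distr_eq_PiM[OF _ rv])
      (simp_all add: restrict_id coins_def coin_sequence.PiM_component)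
  then show ?thesis
    unfolding coins.indep_vars_def coin_events_def by simp
qed

lemma coin_shift_preimage_tail:
  assumes "Y \<in> sets coins"
  shows "coin_shift n -` Y \<in> sigma_sets (space coins) (\<Union> (coin_events ` {n..}))"
proof -
  let ?B = "measure_pmf (bernoulli_pmf (1/2))"
  define G where "G = {{f \<in> \<Pi>\<^sub>E i\<in>(UNIV::nat set). space ?B. f i \<in> A} | i A. A \<in> sets ?B}"
  have "Y \<in> sigma_sets UNIV G"
    using assms unfolding coins_def sets_PiM_single G_def by simp
  then have "coin_shift n -` Y \<inter> UNIV \<in> {coin_shift n -` A \<inter> UNIV | A. A \<in> sigma_sets UNIV G}"
    by blast
  also have "\<dots> = sigma_sets UNIV {coin_shift n -` A \<inter> UNIV | A. A \<in> G}"
    by (rule sigma_sets_vimage_commute) simp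
  also have "\<dots> \<subseteq> sigma_sets UNIV (\<Union> (coin_events ` {n..}))"
  proof (rule sigma_sets_mono')
    show "{coin_shift n -` A \<inter> UNIV | A. A \<in> G} \<subseteq> \<Union> (coin_events ` {n..})"
    proof
      fix S
      assume "S \<in> {coin_shift n -` A \<inter> UNIV | A. A \<in> G}"
      then obtain i A where "S = coin_shift n -` {f. f i \<in> A}"
        unfolding G_def by auto
      then have "S = (\<lambda>\<omega>. \<omega> (i + n)) -` A \<inter> space coins"
        by (auto simp: coin_shift_def)
      then have "S \<in> coin_events (i + n)"
        unfolding coin_events_def by (intro sigma_sets.Basic) auto
      then show "S \<in> \<Union> (coin_events ` {n..})"
        by auto
    qed
  qed
  finally show ?thesis
    by simp
qed

lemma measure_walk_to_bot_0_or_1: "measure coins walk_to_bot = 0 \<or> measure coins walk_to_bot = 1"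
proof (rule coins.kolmogorov_0_1_law[OF _ indep_coin_events])
  show "sigma_algebra (space coins) (coin_events i)" for i
    unfolding coin_events_def by (rule sigma_algebra_sigma_sets) auto
  show "walk_to_bot \<in> coins.tail_events coin_events"
    unfolding coins.tail_events_def using coin_shift_preimage_tail[OF walk_to_bot_sets]
    by (simp add: coin_shift_preimage_walk_to_bot)
qed

definition flip :: "(nat \<Rightarrow> bool) \<Rightarrow> nat \<Rightarrow> bool" where
  "flip \<omega> = (\<lambda>k. \<not> \<omega> k)"

lemma measurable_flip [measurable]: "flip \<in> measurable coins coins"
  unfolding coins_def flip_def[abs_def]
proof (rule measurable_PiM_single')
  show "(\<lambda>\<omega>. \<not> \<omega> i) \<in> PiM UNIV (\<lambda>_. measure_pmf (bernoulli_pmf (1/2))) \<rightarrow>\<^sub>M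
      measure_pmf (bernoulli_pmf (1/2))" for i
    by (rule measurable_compose[OF measurable_component_singleton]) (auto simp: measurable_def)
qed (auto simp: space_PiM)

lemma emeasure_fair_coin_Not:
  "emeasure (measure_pmf (bernoulli_pmf (1/2))) (Not -` S) = emeasure (measure_pmf (bernoulli_pmf (1/2))) S"
proof -
  have "card (Not -` S) = card S"
    by (rule card_vimage_inj) (auto simp: inj_def)
  then show ?thesis
    by (simp add: emeasure_measure_pmf_finite)
qed

lemma distr_flip_coins: "distr coins coins flip = coins"
  unfolding coins_def
proof (rule coin_sequence.PiM_eq)
  let ?B = "measure_pmf (bernoulli_pmf (1/2))"
  fix J :: "nat set" and F
  assume J: "finite J" "J \<subseteq> UNIV" "\<And>j. j \<in> J \<Longrightarrow> F j \<in> sets ?B"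
  let ?C = "prod_emb UNIV (\<lambda>_. ?B) J (\<Pi>\<^sub>E j\<in>J. F j)"
  have "flip -` ?C \<inter> space coin_sequence.S = prod_emb UNIV (\<lambda>_. ?B) J (\<Pi>\<^sub>E j\<in>J. Not -` F j)"
    by (auto simp only: prod_emb_iff restrict_PiE_iff vimage_eq Int_iff)
      (simp_all add: flip_def space_PiM)
  moreover have "?C \<in> sets coin_sequence.S"
    using J by (auto intro!: sets_PiM_I_finite)
  ultimately have "emeasure (distr coin_sequence.S coin_sequence.S flip) ?C
      = emeasure coin_sequence.S (prod_emb UNIV (\<lambda>_. ?B) J (\<Pi>\<^sub>E j\<in>J. Not -` F j))"
    using measurable_flip by (simp add: emeasure_distr coins_def)
  also have "\<dots> = (\<Prod>j\<in>J. emeasure ?B (Not -` F j))"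
    by (rule coin_sequence.emeasure_PiM_emb) (use J in auto)
  finally show "emeasure (distr coin_sequence.S coin_sequence.S flip) ?C = (\<Prod>j\<in>J. emeasure ?B (F j))"
    by (simp add: emeasure_fair_coin_Not)
qed simp

lemma walk_flip: "walk (flip \<omega>) n = - walk \<omega> n"
  by (induction n) (simp_all add: walk_Suc flip_def walk_def)

lemma measure_walk_to_top_eq_walk_to_bot: "measure coins walk_to_top = measure coins walk_to_bot"
proof -
  have "flip -` walk_to_bot \<inter> space coins = walk_to_top"
    by (auto simp: walk_to_bot_def walk_to_top_def walk_flip filterlim_uminus_at_bot)
  moreover have "measure coins walk_to_bot = measure (distr coins coins flip) walk_to_bot"
    by (simp add: distr_flip_coins)
  ultimately show ?thesis
    by (simp add: measure_distr)
qed

lemma walk_diverges_with_probability_0: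
  "measure coins walk_to_top = 0 \<and> measure coins walk_to_bot = 0"
proof -
  have "walk_to_top \<inter> walk_to_bot = {}"
    unfolding walk_to_top_def walk_to_bot_def
    using not_filterlim_at_top_and_at_bot[OF sequentially_bot] by blast
  then have "measure coins walk_to_top + measure coins walk_to_bot \<le> 1"
    using coins.finite_measure_Union[OF walk_to_top_sets walk_to_bot_sets]
      coins.prob_le_1[of "walk_to_top \<union> walk_to_bot"] by simp
  with measure_walk_to_bot_0_or_1 measure_walk_to_top_eq_walk_to_bot show ?thesis
    by auto
qed

lemma inv_f1: "inv f1 = (\<lambda>y. if y < 1 then y - 1 else (y - 1) / 2)"
  by (rule inv_equality) (auto simp: f1_def field_simps)

lemma inv_f2: "inv f2 = (\<lambda>y. y + 1)"
  by (rule inv_equality) (auto simp: f2_def)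

lemma Inv_Suc:
  "Inv \<omega> (Suc n) x = (if \<omega> n then (if Inv \<omega> n x < 1 then Inv \<omega> n x - 1 else (Inv \<omega> n x - 1) / 2)
    else Inv \<omega> n x + 1)"
  by (simp add: Inv_def inv_f1 inv_f2)

lemma Inv_le_walk: "Inv \<omega> n x \<le> x + walk \<omega> n"
proof (induction n)
  case (Suc n)
  then show ?case
    by (auto simp: Inv_Suc walk_Suc)
qed (simp add: Inv_def walk_def)

lemma walk_to_bot_if_Inv_to_bot:
  assumes Inv_bot: "filterlim (\<lambda>n. Inv \<omega> n x) at_bot sequentially"
  shows "filterlim (walk \<omega>) at_bot sequentially"
proof -
  have "eventually (\<lambda>n. Inv \<omega> n x < 1) sequentially"
    using Inv_bot by (simp add: filterlim_at_bot_dense)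
  then obtain N where N: "\<And>n. N \<le> n \<Longrightarrow> Inv \<omega> n x < 1"
    by (auto simp: eventually_sequentially)
  have Inv_eq: "Inv \<omega> (k + N) x = (Inv \<omega> N x - walk \<omega> N) + walk \<omega> (k + N)" for k
  proof (induction k)
    case (Suc k)
    with N[of "k + N"] show ?case
      by (simp add: Inv_Suc walk_Suc)
  qed simp
  have "filterlim (\<lambda>k. Inv \<omega> (k + N) x) at_bot sequentially"
    using Inv_bot by (rule filterlim_sequentially_shift_iff[where k=N, THEN iffD2])
  then have "filterlim (\<lambda>k. walk \<omega> (k + N)) at_bot sequentially"
    unfolding Inv_eq by (subst (asm) filterlim_tendsto_add_at_bot_iff[OF tendsto_const])
  then show ?thesis
    by (rule filterlim_sequentially_shift_iff[THEN iffD1])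
qed

lemma phi0_hat_eq_1: "phi0_hat x = 1"
proof -
  have "{\<omega> \<in> space coins. filterlim (\<lambda>n. Inv \<omega> n x) at_top sequentially} \<subseteq> walk_to_top"
  proof safe
    fix \<omega>
    assume "filterlim (\<lambda>n. Inv \<omega> n x) at_top sequentially"
    then have "filterlim (\<lambda>n. x + walk \<omega> n) at_top sequentially"
      by (rule filterlim_at_top_mono) (simp add: Inv_le_walk)
    then show "\<omega> \<in> walk_to_top"
      unfolding walk_to_top_def filterlim_tendsto_add_at_top_iff[OF tendsto_const] by simp
  qed
  then have "measure coins {\<omega> \<in> space coins. filterlim (\<lambda>n. Inv \<omega> n x) at_top sequentially}
      \<le> measure coins walk_to_top"
    by (rule coins.finite_measure_mono) measurable
  moreover have "{\<omega> \<in> space coins. filterlim (\<lambda>n. Inv \<omega> n x) at_bot sequentially} \<subseteq> walk_to_bot"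
    by (auto simp: walk_to_bot_def intro: walk_to_bot_if_Inv_to_bot)
  then have "measure coins {\<omega> \<in> space coins. filterlim (\<lambda>n. Inv \<omega> n x) at_bot sequentially}
      \<le> measure coins walk_to_bot"
    by (rule coins.finite_measure_mono) measurable
  ultimately show ?thesis
    using walk_diverges_with_probability_0 unfolding phi0_hat_def
    by (smt (verit) measure_nonneg)
qed

theorem mainTheorem10:
  shows "(\<forall>x. phi_plus x = 1) \<and> (\<forall>x. phi0_hat x = 1)"
  by (simp add: phi_plus_eq_1 phi0_hat_eq_1)

end
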